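(* Fix a program in the first-order functional language described in the context, and a program point $\pi$ of an expression in it. Then $$\{\,s\in\{0,1\}^*\mid \mathcal S(L(M_\pi^{\{s\}}))\neq\emptyset\,\}\;=\;L(A^{\mathrm{comp}}_\pi)\,(0+1)^*.$$ Here $M_\pi^{\{s\}}$ is the Mohri–Nederhof regular approximation of the demand grammar $G_\pi^{\{s\}}$, $\mathcal S$ is the simplification function, and $A^{\mathrm{comp}}_\pi$ is the completing automaton of $\pi$.
   Context: Programs. A program consists of first-order function definitions $(\mathtt{define}\ (f\ z_1\ \dots\ z_n)\ e_f)$ and a main expression $e_{\mathrm{main}}$, which is treated as the body of a parameterless function $\mathrm{main}$. Programs are in administrative normal form and all variable names are distinct. The grammar is $e ::= (\mathtt{if}\ x\ e_1\ e_2) \mid (\mathtt{let}\ x \leftarrow s\ \mathtt{in}\ e) \mid (\mathtt{return}\ x)$, $s ::= k \mid \mathtt{nil} \mid (\mathtt{cons}\ x_1\ x_2) \mid (\mathtt{car}\ x) \mid (\mathtt{cdr}\ x) \mid (\mathtt{null?}\ x) \mid (+\ x_1\ x_2) \mid (f\ x_1 \dots x_n)$. Every expression, every application and every variable occurrence carries a distinct label $\pi$. Demands. Let $\Sigma=\{0,1,\bar0,\bar1,2\}$. A demand is a set of strings over $\Sigma$. For sets we write $\sigma_1\sigma_2=\{\alpha\beta\mid\alpha\in\sigma_1,\beta\in\sigma_2\}$ and $a\sigma=\{a\alpha\mid\alpha\in\sigma\}$. Demand analysis. Maps from program points to demands are combined by pointwise union. For applications, $\mathcal A(s,\sigma)$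 is: - for a constant or $\mathtt{nil}$: $\{\pi\mapsto\sigma\}$; - for $(\mathtt{null?}\ \pi_1{:}x)$: $\{\pi_1\mapsto2\sigma,\pi\mapsto\sigma\}$; - for $(+\ \pi_1{:}x\ \pi_2{:}y)$: $\{\pi_1\mapsto2\sigma,\pi_2\mapsto2\sigma,\pi\mapsto\sigma\}$; - for $(\mathtt{car}\ \pi_1{:}x)$: $\{\pi_1\mapsto2\sigma\cup0\sigma,\pi\mapsto\sigma\}$; - for $(\mathtt{cdr}\ \pi_1{:}x)$: $\{\pi_1\mapsto2\sigma\cup1\sigma,\pi\mapsto\sigma\}$; - for $(\mathtt{cons}\ \pi_1{:}x\ \pi_2{:}y)$: $\{\pi_1\mapsto\bar0\sigma,\pi_2\mapsto\bar1\sigma,\pi\mapsto\sigma\}$; - for $(f\ \pi_1{:}y_1\dots\pi_n{:}y_n)$: $\{\pi_i\mapsto L_f^i\sigma,\pi\mapsto\sigma\}$. For expressions, $\mathcal D$ is: - $\mathcal D(\pi{:}(\mathtt{return}\ \pi_1{:}x),\sigma)=\{\pi_1\mapsto\sigma,\pi\mapsto\sigma\}$; - $\mathcal D(\pi{:}(\mathtt{if}\ \pi_1{:}x\ e_1\ e_2),\sigma)=\mathcal D(e_1,\sigma)\cup\mathcal D(e_2,\sigma)\cup\{\pi_1\mapsto2\sigma,\pi\mapsto\sigma\}$; - $\mathcal D(\pi{:}(\mathtt{let}\ x\leftarrow s\ \mathtt{in}\ e),\sigma)=\mathcal A(s,\bigcup_{\pi'}DE(\pi'))\cup DE\cup\{\pi\mapsto\sigma\}$,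 where $DE=\mathcal D(e,\sigma)$ and $\pi'$ ranges over the occurrences of $x$ in $e$. Summaries and concrete demands. $L_f^i\subseteq\Sigma^*$ satisfies $L_f^i\sigma=\bigcup_{\pi'}\mathcal D(e_f,\sigma)(\pi')$ over occurrences $\pi'$ of the $i$-th parameter in $e_f$, for symbolic $\sigma$. The concrete demands are $\sigma_{\mathrm{main}}=$ the given set $\sigma$ of strings over $\{0,1\}$ (the slicing criterion), and $\sigma_f=$ the union of the demands on all call sites of $f$. The demand at $\pi$ in the body of $f$ is $D_\pi=\mathcal D(e_f,\sigma_f)(\pi)$. These equations form a context-free grammar over $\Sigma$ (least solution); $G_\pi^\sigma$ is this grammar with start symbol $D_\pi$. Mohri–Nederhof approximation. Consider each strongly connected component $N'$ of mutually recursive nonterminals whose productions are neither all right-linear nor all left-linear with respect to $N'$. For such a component, add a fresh nonterminal $A'$ for each $A\in N'$. Replace every production $A\to\alpha_0B_1\alpha_1\cdots B_m\alpha_m$ (with $A,B_j\in N'$, the $\alpha_j$ free of $N'$-nonterminals, $m\ge0$) by $A\to\alpha_0B_1,\ B_1'\to\alpha_1B_2,\dots,B_m'\to\alpha_mA'$ (for $m=0$: $A\to\alpha_0A'$), and add $A'\to\epsilon$ for each $A\in N'$. $M_\pi^\sigma$ is the resulting regular grammar/automaton obtained from $G_\pi^\sigma$, with language $L(M_\pi^\sigma)$. Simplification $\mathcal S$ (defined string-wise from the right and extended to sets by union): - $\mathcal S(\epsilon)=\{\epsilon\}$; - $\mathcal S(0w)=0\mathcal S(w)$ and $\mathcal S(1w)=1\mathcal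 S(w)$; - $\mathcal S(\bar0w)=\{\alpha\mid0\alpha\in\mathcal S(w)\}$ and $\mathcal S(\bar1w)=\{\alpha\mid1\alpha\in\mathcal S(w)\}$; - $\mathcal S(2w)=\emptyset$ if $\mathcal S(w)=\emptyset$, and $\{\epsilon\}$ otherwise. Canonicalization $\mathcal C$ (also string-wise from the right, extended by union): - $\mathcal C(\epsilon)=\{\epsilon\}$; - $\mathcal C(0w)=0\mathcal C(w)$, $\mathcal C(1w)=1\mathcal C(w)$, $\mathcal C(2w)=2\mathcal C(w)$; - $\mathcal C(\bar0w)=\{\bar0\mid\mathcal C(w)=\{\epsilon\}\}\cup\{\alpha\mid0\alpha\in\mathcal C(w)\}\cup\{\bar0\bar1\alpha\mid\bar1\alpha\in\mathcal C(w)\}\cup\{\bar0\bar0\alpha\mid\bar0\alpha\in\mathcal C(w)\}$; - $\mathcal C(\bar1w)=\{\bar1\mid\mathcal C(w)=\{\epsilon\}\}\cup\{\alpha\mid1\alpha\in\mathcal C(w)\}\cup\{\bar1\bar1\alpha\mid\bar1\alpha\in\mathcal C(w)\}\cup\{\bar1\bar0\alpha\mid\bar0\alpha\in\mathcal C(w)\}$. $A_\pi$ is an automaton accepting $\mathcal C(L(M_\pi^{\{\epsilon\}}))$. For $p\in\{\bar0,\bar1\}^*$, let $\overline{p}$ be the reverse of $p$ with $\bar0$ replaced by $0$ and $\bar1$ by $1$. The completing automaton $A^{\mathrm{comp}}_\pi$ is constructed from $A_\pi$ as follows: - take as final states the states reachable from the start state using only transitions labelled $0,1,2$; - reverse every $\bar0$-transition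 into a $0$-transition and every $\bar1$-transition into a $1$-transition, dropping all other transitions; - add a new start state with $\epsilon$-transitions to the old final states. Its language is $L(A^{\mathrm{comp}}_\pi)=\{\overline{p}\mid p\in\{\bar0,\bar1\}^*,\ \exists u\in\{0,1,2\}^*:\ up\in L(A_\pi)\}$. *)

theory Defs
  imports Main
begin

section \<open>Demand alphabet\<close>

text \<open>Sigma = {0, 1, 0bar, 1bar, 2}; B0/B1 are the barred letters.\<close>
datatype dsym = D0 | D1 | B0 | B1 | D2

section \<open>Programs (administrative normal form, labelled)\<close>

type_synonym lab = nat
type_synonym var = nat
type_synonym fname = nat

datatype occ = Occ lab var

fun olab :: "occ \<Rightarrow> lab" where "olab (Occ l x) = l"
fun ovar :: "occ \<Rightarrow> var" where "ovar (Occ l x) = x"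

text \<open>Applications s; the first lab is the label of the application.\<close>
datatype app =
    AConst lab int
  | ANil lab
  | ACons lab occ occ
  | ACar lab occ
  | ACdr lab occ
  | ANull lab occ
  | APlus lab occ occ
  | ACall lab fname "occ list"

text \<open>Expressions e; the first lab is the label of the expression.\<close>
datatype expr =
    EIf lab occ expr expr
  | ELet lab var app expr
  | EReturn lab occ

record prog =
  pdefs :: "(fname \<times> var list \<times> expr) list"
  pmain :: expr

datatype fn = Main | Fn fname

fun app_lab :: "app \<Rightarrow> lab" where
  "app_lab (AConst l k) = l"
| "app_lab (ANil l) = l"
| "app_lab (ACons l a b) = l"
| "app_lab (ACar l a) = l"
| "app_lab (ACdr l a) = l"
| "app_lab (ANull l a) = l"
| "app_lab (APlus l a b) = l"
| "app_lab (ACall l f ys) = l"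

fun app_occs :: "app \<Rightarrow> occ list" where
  "app_occs (AConst l k) = []"
| "app_occs (ANil l) = []"
| "app_occs (ACons l a b) = [a, b]"
| "app_occs (ACar l a) = [a]"
| "app_occs (ACdr l a) = [a]"
| "app_occs (ANull l a) = [a]"
| "app_occs (APlus l a b) = [a, b]"
| "app_occs (ACall l f ys) = ys"

fun expr_occs :: "expr \<Rightarrow> occ list" where
  "expr_occs (EIf l x e1 e2) = x # expr_occs e1 @ expr_occs e2"
| "expr_occs (ELet l x s e) = app_occs s @ expr_occs e"
| "expr_occs (EReturn l x) = [x]"

definition occs :: "var \<Rightarrow> expr \<Rightarrow> lab set" where
  "occs x e = {olab v | v. v \<in> set (expr_occs e) \<and> ovar v = x}"

fun expr_labs :: "expr \<Rightarrow> lab list" where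
  "expr_labs (EIf l x e1 e2) = l # olab x # expr_labs e1 @ expr_labs e2"
| "expr_labs (ELet l x s e) = l # app_lab s # map olab (app_occs s) @ expr_labs e"
| "expr_labs (EReturn l x) = [l, olab x]"

fun app_calls :: "app \<Rightarrow> (lab \<times> fname \<times> nat) list" where
  "app_calls (ACall l f ys) = [(l, f, length ys)]"
| "app_calls _ = []"

text \<open>Call sites in e: (label of the application, callee, number of arguments).\<close>
fun calls :: "expr \<Rightarrow> (lab \<times> fname \<times> nat) list" where
  "calls (EIf l x e1 e2) = calls e1 @ calls e2"
| "calls (ELet l x s e) = app_calls s @ calls e"
| "calls (EReturn l x) = []"

fun binders :: "expr \<Rightarrow> var list" where
  "binders (EIf l x e1 e2) = binders e1 @ binders e2"
| "binders (ELet l x s e) = x # binders e"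
| "binders (EReturn l x) = []"

fun scoped :: "var set \<Rightarrow> expr \<Rightarrow> bool" where
  "scoped V (EIf l x e1 e2) = (ovar x \<in> V \<and> scoped V e1 \<and> scoped V e2)"
| "scoped V (ELet l x s e) = (set (map ovar (app_occs s)) \<subseteq> V \<and> scoped (insert x V) e)"
| "scoped V (EReturn l x) = (ovar x \<in> V)"

text \<open>All function bodies, main being the parameterless function Main.\<close>
definition bodies :: "prog \<Rightarrow> (fn \<times> var list \<times> expr) list" where
  "bodies P = (Main, [], pmain P) # map (\<lambda>(f, zs, e). (Fn f, zs, e)) (pdefs P)"

definition prog_labels :: "prog \<Rightarrow> lab set" where
  "prog_labels P = set (concat (map (\<lambda>(h, zs, e). expr_labs e) (bodies P)))"

definition wf_prog :: "prog \<Rightarrow> bool" where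
  "wf_prog P \<longleftrightarrow>
     distinct (map fst (pdefs P)) \<and>
     distinct (concat (map (\<lambda>(h, zs, e). expr_labs e) (bodies P))) \<and>
     distinct (concat (map (\<lambda>(h, zs, e). zs @ binders e) (bodies P))) \<and>
     (\<forall>(h, zs, e) \<in> set (bodies P). scoped (set zs) e \<and>
        (\<forall>(l, g, n) \<in> set (calls e). \<exists>zs' e'. (g, zs', e') \<in> set (pdefs P) \<and> length zs' = n))"

section \<open>Context-free grammars\<close>

datatype ('n, 't) sym = Nt 'n | Tm 't

inductive gen :: "('n \<times> ('n, 't) sym list) set \<Rightarrow> 'n \<Rightarrow> 't list \<Rightarrow> bool"
  and gens :: "('n \<times> ('n, 't) sym list) set \<Rightarrow> ('n, 't) sym list \<Rightarrow> 't list \<Rightarrow> bool"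
  for G where
  "(A, \<alpha>) \<in> G \<Longrightarrow> gens G \<alpha> w \<Longrightarrow> gen G A w"
| "gens G [] []"
| "gens G \<alpha> w \<Longrightarrow> gens G (Tm a # \<alpha>) (a # w)"
| "gen G B u \<Longrightarrow> gens G \<alpha> w \<Longrightarrow> gens G (Nt B # \<alpha>) (u @ w)"

definition lang :: "('n \<times> ('n, 't) sym list) set \<Rightarrow> 'n \<Rightarrow> 't list set" where
  "lang G A = {w. gen G A w}"

section \<open>Demand analysis as a grammar\<close>

text \<open>Nonterminals: L_f^i (0-based i), sigma_f, D_pi.\<close>
datatype nt = LN fname nat | SigN fn | DN lab

type_synonym gsym = "(nt, dsym) sym"

definition lconc :: "'a list set \<Rightarrow> 'a list set \<Rightarrow> 'a list set" where
  "lconc A B = {u @ v | u v. u \<in> A \<and> v \<in> B}"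

definition pre :: "'a \<Rightarrow> 'a list set \<Rightarrow> 'a list set" where
  "pre a S = (\<lambda>w. a # w) ` S"

definition single :: "lab \<Rightarrow> 'a set \<Rightarrow> lab \<Rightarrow> 'a set" where
  "single p X = (\<lambda>q. if q = p then X else {})"

text \<open>The demand transformer A(s, sigma) on sentential forms (maps combined by pointwise union).\<close>
fun Adem :: "app \<Rightarrow> gsym list set \<Rightarrow> lab \<Rightarrow> gsym list set" where
  "Adem (AConst p k) \<sigma> = single p \<sigma>"
| "Adem (ANil p) \<sigma> = single p \<sigma>"
| "Adem (ANull p x) \<sigma> = sup (single (olab x) (pre (Tm D2) \<sigma>)) (single p \<sigma>)"
| "Adem (APlus p x y) \<sigma> =
     sup (sup (single (olab x) (pre (Tm D2) \<sigma>)) (single (olab y) (pre (Tm D2) \<sigma>))) (single p \<sigma>)"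
| "Adem (ACar p x) \<sigma> = sup (single (olab x) (pre (Tm D2) \<sigma> \<union> pre (Tm D0) \<sigma>)) (single p \<sigma>)"
| "Adem (ACdr p x) \<sigma> = sup (single (olab x) (pre (Tm D2) \<sigma> \<union> pre (Tm D1) \<sigma>)) (single p \<sigma>)"
| "Adem (ACons p x y) \<sigma> =
     sup (sup (single (olab x) (pre (Tm B0) \<sigma>)) (single (olab y) (pre (Tm B1) \<sigma>))) (single p \<sigma>)"
| "Adem (ACall p f ys) \<sigma> =
     sup (\<lambda>q. \<Union>i \<in> {i. i < length ys \<and> olab (ys ! i) = q}. pre (Nt (LN f i)) \<sigma>) (single p \<sigma>)"

fun Ddem :: "expr \<Rightarrow> gsym list set \<Rightarrow> lab \<Rightarrow> gsym list set" where
  "Ddem (EReturn p x) \<sigma> = sup (single (olab x) \<sigma>) (single p \<sigma>)"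
| "Ddem (EIf p x e1 e2) \<sigma> =
     sup (sup (Ddem e1 \<sigma>) (Ddem e2 \<sigma>)) (sup (single (olab x) (pre (Tm D2) \<sigma>)) (single p \<sigma>))"
| "Ddem (ELet p x s e) \<sigma> =
     (let DE = Ddem e \<sigma> in sup (sup (Adem s (\<Union>\<pi>' \<in> occs x e. DE \<pi>')) DE) (single p \<sigma>))"

text \<open>The demand grammar for slicing criterion sigma (a set of strings over {0,1}).
  Since D(e, sigma) = D(e, {eps}) sigma, symbolic sigma is handled with {[]}.\<close>
definition demand_grammar :: "prog \<Rightarrow> dsym list set \<Rightarrow> (nt \<times> gsym list) set" where
  "demand_grammar P \<sigma> =
     {(LN f i, w) | f zs e i \<pi>' w. (f, zs, e) \<in> set (pdefs P) \<and> i < length zs \<and>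
                                   \<pi>' \<in> occs (zs ! i) e \<and> w \<in> Ddem e {[]} \<pi>'}
   \<union> {(SigN Main, map Tm s) | s. s \<in> \<sigma>}
   \<union> {(SigN (Fn g), w @ [Nt (SigN h)]) | g h zs e \<pi>c n w.
         (h, zs, e) \<in> set (bodies P) \<and> (\<pi>c, g, n) \<in> set (calls e) \<and> w \<in> Ddem e {[]} \<pi>c}
   \<union> {(DN \<pi>, w @ [Nt (SigN h)]) | \<pi> h zs e w.
         (h, zs, e) \<in> set (bodies P) \<and> \<pi> \<in> set (expr_labs e) \<and> w \<in> Ddem e {[]} \<pi>}"

section \<open>Mohri--Nederhof approximation\<close>

datatype 'n mn = Orig 'n | Prime 'n

definition dep :: "('n \<times> ('n, 't) sym list) set \<Rightarrow> ('n \<times> 'n) set" where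
  "dep G = {(A, B). \<exists>\<alpha>. (A, \<alpha>) \<in> G \<and> Nt B \<in> set \<alpha>}"

definition scc :: "('n \<times> ('n, 't) sym list) set \<Rightarrow> 'n \<Rightarrow> 'n set" where
  "scc G A = {B. (A, B) \<in> (dep G)\<^sup>* \<and> (B, A) \<in> (dep G)\<^sup>*}"

definition nfree :: "'n set \<Rightarrow> ('n, 't) sym list \<Rightarrow> bool" where
  "nfree N \<beta> \<longleftrightarrow> (\<forall>B. Nt B \<in> set \<beta> \<longrightarrow> B \<notin> N)"

definition rlin :: "'n set \<Rightarrow> ('n, 't) sym list \<Rightarrow> bool" where
  "rlin N \<alpha> \<longleftrightarrow> nfree N \<alpha> \<or> (\<exists>\<beta> B. \<alpha> = \<beta> @ [Nt B] \<and> nfree N \<beta>)"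

definition llin :: "'n set \<Rightarrow> ('n, 't) sym list \<Rightarrow> bool" where
  "llin N \<alpha> \<longleftrightarrow> nfree N \<alpha> \<or> (\<exists>\<beta> B. \<alpha> = Nt B # \<beta> \<and> nfree N \<beta>)"

text \<open>The component N' must be transformed: its productions are neither all
  right-linear nor all left-linear with respect to N'.\<close>
definition needs_mn :: "('n \<times> ('n, 't) sym list) set \<Rightarrow> 'n set \<Rightarrow> bool" where
  "needs_mn G N \<longleftrightarrow>
     \<not> (\<forall>(A, \<alpha>) \<in> G. A \<in> N \<longrightarrow> rlin N \<alpha>) \<and> \<not> (\<forall>(A, \<alpha>) \<in> G. A \<in> N \<longrightarrow> llin N \<alpha>)"

fun osym :: "('n, 't) sym \<Rightarrow> ('n mn, 't) sym" where
  "osym (Nt B) = Nt (Orig B)"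
| "osym (Tm a) = Tm a"

text \<open>Splitting A -> a0 B1 a1 ... Bm am into A -> a0 B1, B1' -> a1 B2, ..., Bm' -> am A'.\<close>
fun mn_split :: "'n set \<Rightarrow> 'n mn \<Rightarrow> ('n mn, 't) sym list \<Rightarrow> ('n, 't) sym list \<Rightarrow> 'n
                 \<Rightarrow> ('n mn \<times> ('n mn, 't) sym list) list" where
  "mn_split N H acc [] A = [(H, acc @ [Nt (Prime A)])]"
| "mn_split N H acc (Tm a # r) A = mn_split N H (acc @ [Tm a]) r A"
| "mn_split N H acc (Nt B # r) A =
     (if B \<in> N then (H, acc @ [Nt (Orig B)]) # mn_split N (Prime B) [] r A
      else mn_split N H (acc @ [Nt (Orig B)]) r A)"

definition mohri_nederhof ::
  "('n \<times> ('n, 't) sym list) set \<Rightarrow> ('n mn \<times> ('n mn, 't) sym list) set" where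
  "mohri_nederhof G =
     {(Orig A, map osym \<alpha>) | A \<alpha>. (A, \<alpha>) \<in> G \<and> \<not> needs_mn G (scc G A)}
   \<union> {p | A \<alpha> p. (A, \<alpha>) \<in> G \<and> needs_mn G (scc G A) \<and> p \<in> set (mn_split (scc G A) (Orig A) [] \<alpha> A)}
   \<union> {(Prime A, []) | A. needs_mn G (scc G A)}"

definition Mlang :: "prog \<Rightarrow> dsym list set \<Rightarrow> lab \<Rightarrow> dsym list set" where
  "Mlang P \<sigma> \<pi> = lang (mohri_nederhof (demand_grammar P \<sigma>)) (Orig (DN \<pi>))"

section \<open>Simplification and canonicalization\<close>

fun simp1 :: "dsym list \<Rightarrow> dsym list set" where
  "simp1 [] = {[]}"
| "simp1 (D0 # w) = (\<lambda>a. D0 # a) ` simp1 w"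
| "simp1 (D1 # w) = (\<lambda>a. D1 # a) ` simp1 w"
| "simp1 (B0 # w) = {a. D0 # a \<in> simp1 w}"
| "simp1 (B1 # w) = {a. D1 # a \<in> simp1 w}"
| "simp1 (D2 # w) = (if simp1 w = {} then {} else {[]})"

definition Simp :: "dsym list set \<Rightarrow> dsym list set" where
  "Simp L = (\<Union>w \<in> L. simp1 w)"

fun canon1 :: "dsym list \<Rightarrow> dsym list set" where
  "canon1 [] = {[]}"
| "canon1 (D0 # w) = (\<lambda>a. D0 # a) ` canon1 w"
| "canon1 (D1 # w) = (\<lambda>a. D1 # a) ` canon1 w"
| "canon1 (D2 # w) = (\<lambda>a. D2 # a) ` canon1 w"
| "canon1 (B0 # w) =
     (if canon1 w = {[]} then {[B0]} else {}) \<union> {a. D0 # a \<in> canon1 w}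
     \<union> {B0 # B1 # a | a. B1 # a \<in> canon1 w} \<union> {B0 # B0 # a | a. B0 # a \<in> canon1 w}"
| "canon1 (B1 # w) =
     (if canon1 w = {[]} then {[B1]} else {}) \<union> {a. D1 # a \<in> canon1 w}
     \<union> {B1 # B1 # a | a. B1 # a \<in> canon1 w} \<union> {B1 # B0 # a | a. B0 # a \<in> canon1 w}"

definition Canon :: "dsym list set \<Rightarrow> dsym list set" where
  "Canon L = (\<Union>w \<in> L. canon1 w)"

section \<open>Automata and the completing automaton\<close>

record ('q, 'a) nfa =
  nstart :: 'q
  nfinals :: "'q set"
  ntrans :: "('q \<times> 'a \<times> 'q) set"

inductive npath :: "('q \<times> 'a \<times> 'q) set \<Rightarrow> 'q \<Rightarrow> 'a list \<Rightarrow> 'q \<Rightarrow> bool" for \<delta> where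
  "npath \<delta> q [] q"
| "(q, a, q1) \<in> \<delta> \<Longrightarrow> npath \<delta> q1 w q' \<Longrightarrow> npath \<delta> q (a # w) q'"

definition nfa_lang :: "('q, 'a) nfa \<Rightarrow> 'a list set" where
  "nfa_lang A = {w. \<exists>f \<in> nfinals A. npath (ntrans A) (nstart A) w f}"

text \<open>Language of an automaton with epsilon transitions (label None).\<close>
definition enfa_lang :: "('q, 'a option) nfa \<Rightarrow> 'a list set" where
  "enfa_lang A = {concat (map (\<lambda>l. case l of None \<Rightarrow> [] | Some a \<Rightarrow> [a]) u) | u f.
                    f \<in> nfinals A \<and> npath (ntrans A) (nstart A) u f}"

inductive_set reach012 :: "('q, dsym) nfa \<Rightarrow> 'q set" for A where
  "nstart A \<in> reach012 A"
| "q \<in> reach012 A \<Longrightarrow> (q, a, q') \<in> ntrans A \<Longrightarrow> a \<in> {D0, D1, D2} \<Longrightarrow> q' \<in> reach012 A"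

definition completing :: "('q, dsym) nfa \<Rightarrow> ('q option, dsym option) nfa" where
  "completing A =
     \<lparr> nstart = None,
       nfinals = Some ` reach012 A,
       ntrans = {(None, None, Some f) | f. f \<in> nfinals A}
              \<union> {(Some q', Some D0, Some q) | q q'. (q, B0, q') \<in> ntrans A}
              \<union> {(Some q', Some D1, Some q) | q q'. (q, B1, q') \<in> ntrans A} \<rparr>"

end

(*
  For s over {0,1} the demand grammar G_pi^{s} is G_pi^{eps} plus the production
  sigma_main -> s.  Outside the summary nonterminals L_f^i, every production is a
  right-linear chain ending in some sigma_h, and such components are left alone by the
  Mohri-Nederhof transformation; so a derivation of M_pi^{s} from D_pi ends with the
  production of sigma_main, and L(M_pi^{s}) = L(M_pi^{eps}) s.

  Simplification factors through canonicalization, and every canonical word has the form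
  u p with u over {0,1,2} and p over the barred letters.  For s over {0,1}, S(u p s) is
  nonempty iff the unbarred reverse of p is a prefix of s, and the completing automaton
  accepts exactly these unbarred reverses of the words u p accepted by A_pi.
*)

theory Submission
  imports Defs "HOL-Library.Sublist"
begin

section \<open>Simplification of canonical words\<close>

fun unbar :: "dsym \<Rightarrow> dsym" where
  "unbar B0 = D0" | "unbar B1 = D1" | "unbar x = x"

text \<open>\<^term>\<open>map unbar (rev p)\<close> is the paper's overlined \<open>p\<close>.\<close>

definition canonical :: "dsym list \<Rightarrow> bool" where
  "canonical c \<longleftrightarrow> (\<exists>u p. c = u @ p \<and> set u \<subseteq> {D0, D1, D2} \<and> set p \<subseteq> {B0, B1})"

lemma canonical_Nil [simp]: "canonical []"
  unfolding canonical_def by simp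

lemma canonical_Cons_unbarred [simp]:
  assumes "x \<in> {D0, D1, D2}"
  shows "canonical (x # c) \<longleftrightarrow> canonical c"
proof
  assume "canonical (x # c)"
  then obtain u p where up: "x # c = u @ p" "set u \<subseteq> {D0, D1, D2}" "set p \<subseteq> {B0, B1}"
    unfolding canonical_def by blast
  show "canonical c"
  proof (cases u)
    case Nil
    with up assms show ?thesis by auto
  next
    case (Cons y u')
    with up have "c = u' @ p" "set u' \<subseteq> {D0, D1, D2}" by auto
    with up(3) show ?thesis unfolding canonical_def by blast
  qed
next
  assume "canonical c"
  then obtain u p where "c = u @ p" "set u \<subseteq> {D0, D1, D2}" "set p \<subseteq> {B0, B1}"
    unfolding canonical_def by blast
  with assms have "x # c = (x # u) @ p" "set (x # u) \<subseteq> {D0, D1, D2}" by auto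
  with \<open>set p \<subseteq> {B0, B1}\<close> show "canonical (x # c)"
    unfolding canonical_def by blast
qed

lemma canonical_Cons_barred [simp]:
  assumes "x \<in> {B0, B1}"
  shows "canonical (x # c) \<longleftrightarrow> set c \<subseteq> {B0, B1}"
proof
  assume "canonical (x # c)"
  then obtain u p where up: "x # c = u @ p" "set u \<subseteq> {D0, D1, D2}" "set p \<subseteq> {B0, B1}"
    unfolding canonical_def by blast
  have "u = []"
  proof (rule ccontr)
    assume "u \<noteq> []"
    with up(1) have "x \<in> set u" by (cases u) auto
    with up(2) assms show False by auto
  qed
  with up show "set c \<subseteq> {B0, B1}" by auto
next
  assume "set c \<subseteq> {B0, B1}"
  with assms show "canonical (x # c)"
    unfolding canonical_def by (intro exI[of _ "[]"] exI[of _ "x # c"]) simp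
qed

lemma canon1_at_most_one: "a \<in> canon1 w \<Longrightarrow> b \<in> canon1 w \<Longrightarrow> a = b"
  by (induction w arbitrary: a b rule: canon1.induct) (auto split: if_splits)

lemma canon1_canonical: "c \<in> canon1 w \<Longrightarrow> canonical c"
proof (induction w arbitrary: c)
  case (Cons x w)
  then show ?case by (cases x) (auto split: if_splits dest!: Cons.IH)
qed simp

lemma simp1_append_canon1: "simp1 (w @ s) = (\<Union>c \<in> canon1 w. simp1 (c @ s))"
proof (induction w)
  case (Cons x w)
  consider "canon1 w = {}" | c where "canon1 w = {c}"
    using canon1_at_most_one by blast
  then show ?case
  proof cases
    case 1
    with Cons.IH show ?thesis by (cases x) auto
  next
    case (2 c)
    with Cons.IH have IH: "simp1 (w @ s) = simp1 (c @ s)" by simp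
    show ?thesis
    proof (cases x)
      case B0 then show ?thesis using IH 2 by (cases c rule: simp1.cases) auto
    next
      case B1 then show ?thesis using IH 2 by (cases c rule: simp1.cases) auto
    qed (use IH 2 in auto)
  qed
qed simp

lemma simp1_unbarred_word: "set s \<subseteq> {D0, D1} \<Longrightarrow> simp1 s = {s}"
proof (induction s)
  case (Cons a s) then show ?case by (cases a) auto
qed simp

lemma simp1_barred_append:
  "set p \<subseteq> {B0, B1} \<Longrightarrow> set s \<subseteq> {D0, D1} \<Longrightarrow> simp1 (p @ s) = {r. s = map unbar (rev p) @ r}"
proof (induction p)
  case (Cons a p) then show ?case by (cases a) auto
qed (simp add: simp1_unbarred_word)

lemma simp1_unbarred_append_eq_empty:
  "set u \<subseteq> {D0, D1, D2} \<Longrightarrow> simp1 (u @ x) = {} \<longleftrightarrow> simp1 x = {}"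
proof (induction u)
  case (Cons a u) then show ?case by (cases a) auto
qed simp

lemma simp1_split_append_nonempty:
  assumes "set u \<subseteq> {D0, D1, D2}" "set p \<subseteq> {B0, B1}" "set s \<subseteq> {D0, D1}"
  shows "simp1 ((u @ p) @ s) \<noteq> {} \<longleftrightarrow> prefix (map unbar (rev p)) s"
proof -
  have "simp1 ((u @ p) @ s) \<noteq> {} \<longleftrightarrow> simp1 (p @ s) \<noteq> {}"
    using simp1_unbarred_append_eq_empty[OF assms(1), of "p @ s"] by simp
  also have "\<dots> \<longleftrightarrow> (\<exists>r. s = map unbar (rev p) @ r)"
    unfolding simp1_barred_append[OF assms(2,3)] by blast
  finally show ?thesis unfolding prefix_def .
qed

lemma Simp_append_nonempty_iff:
  assumes "set s \<subseteq> {D0, D1}"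
  shows "Simp ((\<lambda>w. w @ s) ` L) \<noteq> {} \<longleftrightarrow>
    (\<exists>u p. u @ p \<in> Canon L \<and> set u \<subseteq> {D0, D1, D2} \<and> set p \<subseteq> {B0, B1} \<and>
           prefix (map unbar (rev p)) s)" (is "_ \<longleftrightarrow> ?canonical_witness")
proof -
  have "simp1 (w @ s) \<noteq> {} \<longleftrightarrow> (\<exists>c \<in> canon1 w. simp1 (c @ s) \<noteq> {})" for w
    by (subst simp1_append_canon1) blast
  then have "Simp ((\<lambda>w. w @ s) ` L) \<noteq> {} \<longleftrightarrow> (\<exists>w \<in> L. \<exists>c \<in> canon1 w. simp1 (c @ s) \<noteq> {})"
    unfolding Simp_def by blast
  also have "\<dots> \<longleftrightarrow> (\<exists>c \<in> Canon L. simp1 (c @ s) \<noteq> {})"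
    unfolding Canon_def by blast
  also have "\<dots> \<longleftrightarrow> ?canonical_witness"
  proof
    assume "\<exists>c \<in> Canon L. simp1 (c @ s) \<noteq> {}"
    then obtain c where c: "c \<in> Canon L" "simp1 (c @ s) \<noteq> {}" by blast
    then have "canonical c" using canon1_canonical unfolding Canon_def by blast
    then obtain u p where "c = u @ p" "set u \<subseteq> {D0, D1, D2}" "set p \<subseteq> {B0, B1}"
      unfolding canonical_def by blast
    with c show ?canonical_witness
      using simp1_split_append_nonempty[OF _ _ assms] by blast
  next
    assume ?canonical_witness
    then obtain u p where "u @ p \<in> Canon L" "set u \<subseteq> {D0, D1, D2}" "set p \<subseteq> {B0, B1}"
      "prefix (map unbar (rev p)) s" by blast
    then show "\<exists>c \<in> Canon L. simp1 (c @ s) \<noteq> {}"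
      using simp1_split_append_nonempty[OF _ _ assms] by blast
  qed
  finally show ?thesis .
qed

section \<open>The completing automaton\<close>

lemma npath_Nil [simp]: "npath \<delta> q [] q' \<longleftrightarrow> q = q'"
  by (auto elim: npath.cases intro: npath.intros)

lemma npath_Cons [simp]: "npath \<delta> q (a # w) q' \<longleftrightarrow> (\<exists>q1. (q, a, q1) \<in> \<delta> \<and> npath \<delta> q1 w q')"
  by (auto elim: npath.cases intro: npath.intros)

lemma npath_append: "npath \<delta> q (u @ v) q' \<longleftrightarrow> (\<exists>m. npath \<delta> q u m \<and> npath \<delta> m v q')"
  by (induction u arbitrary: q) auto

lemma reach012_iff_path:
  "q \<in> reach012 A \<longleftrightarrow> (\<exists>u. set u \<subseteq> {D0, D1, D2} \<and> npath (ntrans A) (nstart A) u q)"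
proof
  assume "q \<in> reach012 A"
  then show "\<exists>u. set u \<subseteq> {D0, D1, D2} \<and> npath (ntrans A) (nstart A) u q"
  proof (induction rule: reach012.induct)
    case 1 then show ?case by (intro exI[of _ "[]"]) simp
  next
    case (2 q a q')
    then obtain u where "set u \<subseteq> {D0, D1, D2}" "npath (ntrans A) (nstart A) u q" by blast
    with 2 show ?case by (intro exI[of _ "u @ [a]"]) (auto simp: npath_append)
  qed
next
  have "npath (ntrans A) q0 u q \<Longrightarrow> q0 \<in> reach012 A \<Longrightarrow> set u \<subseteq> {D0, D1, D2} \<Longrightarrow> q \<in> reach012 A"
    for q0 u by (induction rule: npath.induct) (auto intro: reach012.intros)
  then show "\<exists>u. set u \<subseteq> {D0, D1, D2} \<and> npath (ntrans A) (nstart A) u q \<Longrightarrow> q \<in> reach012 A"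
    by (auto intro: reach012.intros)
qed

lemma nstart_completing [simp]: "nstart (completing A) = None"
  and nfinals_completing [simp]: "nfinals (completing A) = Some ` reach012 A"
  by (simp_all add: completing_def)

lemma ntrans_completing_None [simp]:
  "(None, a, y) \<in> ntrans (completing A) \<longleftrightarrow> a = None \<and> (\<exists>f \<in> nfinals A. y = Some f)"
  by (auto simp: completing_def)

lemma ntrans_completing_Some [simp]:
  "(Some q', a, y) \<in> ntrans (completing A) \<longleftrightarrow>
   (\<exists>q b. y = Some q \<and> b \<in> {B0, B1} \<and> a = Some (unbar b) \<and> (q, b, q') \<in> ntrans A)"
  by (auto simp: completing_def) (fastforce+)

lemma npath_completing_Some:
  "npath (ntrans (completing A)) (Some q') xs g \<longleftrightarrow>
   (\<exists>q p. g = Some q \<and> set p \<subseteq> {B0, B1} \<and> xs = map Some (map unbar (rev p)) \<and> npath (ntrans A) q p q')"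
proof
  show "npath (ntrans (completing A)) (Some q') xs g \<Longrightarrow>
    \<exists>q p. g = Some q \<and> set p \<subseteq> {B0, B1} \<and> xs = map Some (map unbar (rev p)) \<and> npath (ntrans A) q p q'"
  proof (induction xs arbitrary: q')
    case (Cons a xs)
    then obtain q1 b where "b \<in> {B0, B1}" "a = Some (unbar b)" "(q1, b, q') \<in> ntrans A"
      "npath (ntrans (completing A)) (Some q1) xs g" by auto
    with Cons.IH show ?case by (fastforce intro!: exI[of _ "_ @ [b]"] simp: npath_append)
  qed simp
next
  have "set p \<subseteq> {B0, B1} \<Longrightarrow> npath (ntrans A) q p q' \<Longrightarrow>
      npath (ntrans (completing A)) (Some q') (map Some (map unbar (rev p))) (Some q)" for q p
  proof (induction p arbitrary: q)
    case (Cons b p)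
    then obtain q1 where "(q, b, q1) \<in> ntrans A" "npath (ntrans A) q1 p q'" by auto
    with Cons have "npath (ntrans (completing A)) (Some q') (map Some (map unbar (rev p))) (Some q1)"
      "(Some q1, Some (unbar b), Some q) \<in> ntrans (completing A)" by auto
    then show ?case by (simp add: npath_append del: ntrans_completing_Some) blast
  qed simp
  then show "\<exists>q p. g = Some q \<and> set p \<subseteq> {B0, B1} \<and> xs = map Some (map unbar (rev p)) \<and>
      npath (ntrans A) q p q' \<Longrightarrow> npath (ntrans (completing A)) (Some q') xs g"
    by blast
qed

lemma npath_completing_None:
  "npath (ntrans (completing A)) None xs (Some q) \<longleftrightarrow>
   (\<exists>f \<in> nfinals A. \<exists>p. set p \<subseteq> {B0, B1} \<and> xs = None # map Some (map unbar (rev p)) \<and>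
      npath (ntrans A) q p f)"
proof
  assume "npath (ntrans (completing A)) None xs (Some q)"
  then obtain a xs' q1 where "xs = a # xs'" "(None, a, q1) \<in> ntrans (completing A)"
    "npath (ntrans (completing A)) q1 xs' (Some q)"
    by (cases xs) auto
  then obtain f where "f \<in> nfinals A" "xs = None # xs'" "npath (ntrans (completing A)) (Some f) xs' (Some q)"
    by auto
  then show "\<exists>f \<in> nfinals A. \<exists>p. set p \<subseteq> {B0, B1} \<and> xs = None # map Some (map unbar (rev p)) \<and>
      npath (ntrans A) q p f"
    unfolding npath_completing_Some by auto
next
  assume "\<exists>f \<in> nfinals A. \<exists>p. set p \<subseteq> {B0, B1} \<and> xs = None # map Some (map unbar (rev p)) \<and>
      npath (ntrans A) q p f"
  then obtain f p where "f \<in> nfinals A" "set p \<subseteq> {B0, B1}" "xs = None # map Some (map unbar (rev p))"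
    "npath (ntrans A) q p f" by blast
  moreover from this have "npath (ntrans (completing A)) (Some f) (map Some (map unbar (rev p))) (Some q)"
    unfolding npath_completing_Some by blast
  ultimately show "npath (ntrans (completing A)) None xs (Some q)"
    by (auto intro: npath.intros)
qed

lemma concat_erase_None_map_Some:
  "concat (map (\<lambda>l. case l of None \<Rightarrow> [] | Some a \<Rightarrow> [a]) (None # map Some ys)) = ys"
  by (induction ys) auto

lemma mem_enfa_lang_completing:
  "x \<in> enfa_lang (completing A) \<longleftrightarrow>
   (\<exists>q \<in> reach012 A. \<exists>f \<in> nfinals A. \<exists>p. set p \<subseteq> {B0, B1} \<and> x = map unbar (rev p) \<and>
      npath (ntrans A) q p f)"
proof -
  have "x \<in> enfa_lang (completing A) \<longleftrightarrow>
      (\<exists>xs q. q \<in> reach012 A \<and> npath (ntrans (completing A)) None xs (Some q) \<and>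
         x = concat (map (\<lambda>l. case l of None \<Rightarrow> [] | Some a \<Rightarrow> [a]) xs))"
    unfolding enfa_lang_def by auto
  also have "\<dots> \<longleftrightarrow> (\<exists>q \<in> reach012 A. \<exists>f \<in> nfinals A. \<exists>p. set p \<subseteq> {B0, B1} \<and>
      x = concat (map (\<lambda>l. case l of None \<Rightarrow> [] | Some a \<Rightarrow> [a]) (None # map Some (map unbar (rev p)))) \<and>
      npath (ntrans A) q p f)"
    unfolding npath_completing_None by blast
  finally show ?thesis
    unfolding concat_erase_None_map_Some .
qed

lemma enfa_lang_completing:
  "enfa_lang (completing A) =
     {map unbar (rev p) | u p. u @ p \<in> nfa_lang A \<and> set u \<subseteq> {D0, D1, D2} \<and> set p \<subseteq> {B0, B1}}"
proof (rule set_eqI)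
  fix x
  show "x \<in> enfa_lang (completing A) \<longleftrightarrow>
      x \<in> {map unbar (rev p) | u p. u @ p \<in> nfa_lang A \<and> set u \<subseteq> {D0, D1, D2} \<and> set p \<subseteq> {B0, B1}}"
    unfolding mem_enfa_lang_completing Bex_def reach012_iff_path nfa_lang_def mem_Collect_eq npath_append
    by blast
qed

lemma enfa_lang_completing_unbarred:
  "q \<in> enfa_lang (completing A) \<Longrightarrow> set q \<subseteq> {D0, D1}"
proof -
  have "set p \<subseteq> {B0, B1} \<Longrightarrow> set (map unbar (rev p)) \<subseteq> {D0, D1}" for p
    by (induction p) auto
  then show "q \<in> enfa_lang (completing A) \<Longrightarrow> set q \<subseteq> {D0, D1}"
    unfolding enfa_lang_completing by blast
qed

lemma lconc_words_eq_prefixes: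
  assumes "E \<subseteq> {w. set w \<subseteq> X}"
  shows "lconc E {w. set w \<subseteq> X} = {s. set s \<subseteq> X \<and> (\<exists>q \<in> E. prefix q s)}"
  using assms unfolding lconc_def prefix_def by (auto; blast)

section \<open>Right-chained grammars\<close>

lemma gens_Nil_iff [simp]: "gens G [] w \<longleftrightarrow> w = []"
  by (auto elim: gens.cases intro: gen_gens.intros)

lemma gens_Tm_Cons_iff [simp]: "gens G (Tm a # \<alpha>) w \<longleftrightarrow> (\<exists>w'. w = a # w' \<and> gens G \<alpha> w')"
  by (auto elim: gens.cases intro: gen_gens.intros)

lemma gens_Nt_Cons_iff: "gens G (Nt B # \<alpha>) w \<longleftrightarrow> (\<exists>u v. w = u @ v \<and> gen G B u \<and> gens G \<alpha> v)"
proof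
  assume "gens G (Nt B # \<alpha>) w"
  then show "\<exists>u v. w = u @ v \<and> gen G B u \<and> gens G \<alpha> v"
    by (cases rule: gens.cases) auto
qed (auto intro: gen_gens.intros)

lemma gens_map_Tm_iff [simp]: "gens G (map Tm s) w \<longleftrightarrow> w = s"
  by (induction s arbitrary: w) auto

lemma gens_Nt_single_iff: "gens G [Nt B] w \<longleftrightarrow> gen G B w"
  by (auto simp: gens_Nt_Cons_iff)

text \<open>From a nonterminal in \<open>T\<close> every derivation runs along a chain \<open>\<beta>\<^sub>1 Z\<^sub>1, \<beta>\<^sub>2 Z\<^sub>2, \<dots>\<close>
  of nonterminals in \<open>T\<close>, the \<open>\<beta>\<^sub>i\<close> never reaching \<open>T\<close> again.\<close>

definition right_chained :: "('n \<times> ('n, 't) sym list) set \<Rightarrow> 'n set \<Rightarrow> bool" where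
  "right_chained G T \<longleftrightarrow>
     (\<forall>(A, \<alpha>) \<in> G. if A \<in> T then \<exists>\<beta> Z. \<alpha> = \<beta> @ [Nt Z] \<and> Z \<in> T \<and> nfree T \<beta> else nfree T \<alpha>)"

lemma gen_transfer_outside:
  assumes "\<And>A \<alpha>. (A, \<alpha>) \<in> G \<Longrightarrow> A \<notin> T \<Longrightarrow> nfree T \<alpha> \<and> (A, \<alpha>) \<in> G'"
  shows "gen G A w \<Longrightarrow> A \<notin> T \<Longrightarrow> gen G' A w"
    and "gens G \<alpha> w \<Longrightarrow> nfree T \<alpha> \<Longrightarrow> gens G' \<alpha> w"
proof (induction rule: gen_gens.inducts)
  case (1 A \<alpha> w)
  with assms show ?case by (blast intro: gen_gens.intros)
qed (auto simp: nfree_def intro: gen_gens.intros)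

lemma gen_right_chained_insert_outside:
  assumes "right_chained G T" "X \<in> T" "gen (insert (X, \<alpha>) G) A w" "A \<notin> T"
  shows "gen (insert (X, \<alpha>') G) A w"
  using assms(1,2) by (intro gen_transfer_outside(1)[OF _ assms(3,4)]) (auto simp: right_chained_def)

text \<open>Stated for arbitrary \<open>s\<close> and \<open>t\<close> so that one induction gives both inclusions below.\<close>

lemma gen_right_chained_swap_tail:
  fixes G :: "('n \<times> ('n, 't) sym list) set"
  assumes G: "right_chained G T" and X: "X \<in> T" "\<And>\<alpha>. (X, \<alpha>) \<notin> G"
  shows "gen (insert (X, map Tm s) G) Y v \<Longrightarrow>
           Y \<in> T \<longrightarrow> (\<exists>u. v = u @ s \<and> gen (insert (X, map Tm t) G) Y (u @ t))"
    and "gens (insert (X, map Tm s) G) \<gamma> v \<Longrightarrow> \<forall>\<beta> Z. \<gamma> = \<beta> @ [Nt Z] \<and> nfree T \<beta> \<and> Z \<in> T \<longrightarrow>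
           (\<exists>u. v = u @ s \<and> gens (insert (X, map Tm t) G) \<gamma> (u @ t))"
proof (induction rule: gen_gens.inducts)
  case (1 A \<alpha> w)
  show ?case
  proof (intro impI)
    assume "A \<in> T"
    show "\<exists>u. w = u @ s \<and> gen (insert (X, map Tm t) G) A (u @ t)"
    proof (cases "A = X")
      case True
      with X(2) 1(1,2) have "w = s" by auto
      moreover have "gen (insert (X, map Tm t) G) X t"
        by (rule gen_gens.intros(1)[where \<alpha> = "map Tm t"]) auto
      ultimately show ?thesis using True by (intro exI[of _ "[]"]) simp
    next
      case False
      with 1(1) have "(A, \<alpha>) \<in> G" by blast
      with G \<open>A \<in> T\<close> obtain \<beta> Z where "\<alpha> = \<beta> @ [Nt Z]" "Z \<in> T" "nfree T \<beta>"
        unfolding right_chained_def by fastforce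
      with 1(3) obtain u where "w = u @ s" "gens (insert (X, map Tm t) G) \<alpha> (u @ t)" by blast
      with \<open>(A, \<alpha>) \<in> G\<close> show ?thesis by (blast intro: gen_gens.intros)
    qed
  qed
next
  case (3 \<alpha> w a)
  show ?case
  proof (intro allI impI)
    fix \<beta> Z assume \<beta>: "Tm a # \<alpha> = \<beta> @ [Nt Z] \<and> nfree T \<beta> \<and> Z \<in> T"
    then obtain \<beta>' where "\<beta> = Tm a # \<beta>'" by (cases \<beta>) auto
    with \<beta> 3(2) obtain u where "w = u @ s" "gens (insert (X, map Tm t) G) \<alpha> (u @ t)"
      by (auto simp: nfree_def)
    then show "\<exists>u. a # w = u @ s \<and> gens (insert (X, map Tm t) G) (Tm a # \<alpha>) (u @ t)"
      by (intro exI[of _ "a # u"]) simp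
  qed
next
  case (4 C u0 \<alpha> w)
  show ?case
  proof (intro allI impI)
    fix \<beta> Z assume \<beta>: "Nt C # \<alpha> = \<beta> @ [Nt Z] \<and> nfree T \<beta> \<and> Z \<in> T"
    show "\<exists>u. u0 @ w = u @ s \<and> gens (insert (X, map Tm t) G) (Nt C # \<alpha>) (u @ t)"
    proof (cases \<beta>)
      case Nil
      with \<beta> 4(3) have "C = Z" "\<alpha> = []" "w = []" by auto
      with \<beta> 4(2) obtain u where "u0 = u @ s" "gen (insert (X, map Tm t) G) C (u @ t)" by blast
      with \<open>\<alpha> = []\<close> \<open>w = []\<close> show ?thesis by (auto simp: gens_Nt_single_iff)
    next
      case (Cons y \<beta>')
      with \<beta> have "C \<notin> T" "\<alpha> = \<beta>' @ [Nt Z]" "nfree T \<beta>'" by (auto simp: nfree_def)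
      with \<beta> 4(4) obtain u where "w = u @ s" "gens (insert (X, map Tm t) G) \<alpha> (u @ t)" by blast
      moreover have "gen (insert (X, map Tm t) G) C u0"
        using gen_right_chained_insert_outside[OF G X(1) 4(1) \<open>C \<notin> T\<close>] .
      ultimately show ?thesis by (intro exI[of _ "u0 @ u"]) (auto intro: gen_gens.intros)
    qed
  qed
qed simp

lemma lang_right_chained_insert:
  assumes "right_chained G T" "X \<in> T" "\<And>\<alpha>. (X, \<alpha>) \<notin> G" "Y \<in> T"
  shows "lang (insert (X, map Tm s) G) Y = (\<lambda>u. u @ s) ` lang (insert (X, []) G) Y"
proof (intro set_eqI iffI)
  fix v assume "v \<in> lang (insert (X, map Tm s) G) Y"
  with gen_right_chained_swap_tail(1)[OF assms(1-3), of s Y v "[]"] assms(4)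
  show "v \<in> (\<lambda>u. u @ s) ` lang (insert (X, []) G) Y" unfolding lang_def by auto
next
  fix v assume "v \<in> (\<lambda>u. u @ s) ` lang (insert (X, []) G) Y"
  then obtain u where "v = u @ s" "gen (insert (X, map Tm []) G) Y u" unfolding lang_def by auto
  with gen_right_chained_swap_tail(1)[OF assms(1-3), of "[]" Y u s] assms(4)
  show "v \<in> lang (insert (X, map Tm s) G) Y" unfolding lang_def by auto
qed

section \<open>The Mohri--Nederhof approximation of the demand grammar\<close>

lemma nfree_map_osym_iff: "nfree (Orig ` N) (map osym \<alpha>) \<longleftrightarrow> nfree N \<alpha>"
proof (induction \<alpha>)
  case (Cons a \<alpha>) then show ?case by (cases a) (auto simp: nfree_def)
qed (simp add: nfree_def)

lemma mn_split_head: "(H', \<beta>) \<in> set (mn_split N H acc \<alpha> A) \<Longrightarrow> H' = H \<or> (\<exists>B. H' = Prime B)"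
  by (induction N H acc \<alpha> A rule: mn_split.induct) (auto split: if_splits)

lemma mn_split_nonterminals:
  "(H', \<beta>) \<in> set (mn_split N H acc \<alpha> A) \<Longrightarrow> Nt Y \<in> set \<beta> \<Longrightarrow>
   Nt Y \<in> set acc \<or> (\<exists>B. Y = Orig B \<and> Nt B \<in> set \<alpha>) \<or> Y = Prime A"
  by (induction N H acc \<alpha> A arbitrary: H' \<beta> rule: mn_split.induct) (fastforce split: if_splits)+

lemma dep_insert_terminals: "dep (insert (A, map Tm s) G) = dep G"
  unfolding dep_def by auto

lemma needs_mn_insert_terminals: "needs_mn (insert (A, map Tm s) G) N = needs_mn G N"
proof -
  have "rlin N (map Tm s)" "llin N (map Tm s)"
    unfolding rlin_def llin_def nfree_def by auto
  then show ?thesis unfolding needs_mn_def by auto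
qed

lemma mohri_nederhof_insert_terminals:
  assumes "\<not> needs_mn G (scc G A)"
  shows "mohri_nederhof (insert (A, map Tm s) G) = insert (Orig A, map Tm s) (mohri_nederhof G)"
proof -
  have "scc (insert (A, map Tm s) G) = scc G"
    unfolding scc_def dep_insert_terminals ..
  moreover have osym: "map osym (map Tm s) = map Tm s" by (induction s) auto
  ultimately show ?thesis
    using assms unfolding mohri_nederhof_def needs_mn_insert_terminals by auto (metis osym)
qed

definition summaries :: "nt set" where
  "summaries = {LN f i | f i. True}"

lemma LN_in_summaries [simp]: "LN f i \<in> summaries"
  and SigN_notin_summaries [simp]: "SigN h \<notin> summaries"
  and DN_notin_summaries [simp]: "DN \<pi> \<notin> summaries"
  by (auto simp: summaries_def)

lemma Adem_summary_free:
  "x \<in> Adem s S q \<Longrightarrow> \<forall>z \<in> S. nfree (- summaries) z \<Longrightarrow> nfree (- summaries) x"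
  by (cases s) (auto simp: single_def pre_def nfree_def split: if_splits)

lemma Ddem_summary_free:
  "x \<in> Ddem e S q \<Longrightarrow> \<forall>z \<in> S. nfree (- summaries) z \<Longrightarrow> nfree (- summaries) x"
proof (induction e arbitrary: q x)
  case (ELet l v s e)
  have "\<forall>z \<in> (\<Union>\<pi>' \<in> occs v e. Ddem e S \<pi>'). nfree (- summaries) z"
    using ELet by blast
  with ELet show ?case
    by (auto simp: Let_def single_def split: if_splits dest: Adem_summary_free)
qed (auto simp: single_def pre_def nfree_def split: if_splits)

lemma demand_grammar_insert_criterion:
  "demand_grammar P {s} = insert (SigN Main, map Tm s) (demand_grammar P {})"
  unfolding demand_grammar_def by blast

lemma demand_grammar_productions:
  assumes "(A, \<alpha>) \<in> demand_grammar P {}"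
  shows "A \<in> summaries \<and> nfree (- summaries) \<alpha> \<or>
         A \<notin> summaries \<and> A \<noteq> SigN Main \<and> (\<exists>\<beta> h. \<alpha> = \<beta> @ [Nt (SigN h)] \<and> nfree (- summaries) \<beta>)"
proof -
  have "nfree (- summaries) x" if "x \<in> Ddem e {[]} q" for e q x
    using Ddem_summary_free[OF that] by (simp add: nfree_def)
  then show ?thesis
    using assms unfolding demand_grammar_def by (elim UnE; clarsimp)
qed

lemma rtrancl_dep_demand_grammar_summaries:
  "(A, B) \<in> (dep (demand_grammar P {}))\<^sup>* \<Longrightarrow> A \<in> summaries \<Longrightarrow> B \<in> summaries"
proof (induction rule: rtrancl_induct)
  case (step B C)
  then obtain \<alpha> where "(B, \<alpha>) \<in> demand_grammar P {}" "Nt C \<in> set \<alpha>"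
    unfolding dep_def by blast
  with step show ?case using demand_grammar_productions by (fastforce simp: nfree_def)
qed

lemma not_needs_mn_outside_summaries:
  assumes "A \<notin> summaries"
  shows "\<not> needs_mn (demand_grammar P {}) (scc (demand_grammar P {}) A)"
proof -
  let ?G = "demand_grammar P {}" and ?N = "scc (demand_grammar P {}) A"
  have "?N \<subseteq> - summaries"
    using assms rtrancl_dep_demand_grammar_summaries unfolding scc_def by blast
  have "rlin ?N \<alpha>" if "(B, \<alpha>) \<in> ?G" "B \<in> ?N" for B \<alpha>
  proof -
    from that \<open>?N \<subseteq> - summaries\<close> obtain \<beta> h where "\<alpha> = \<beta> @ [Nt (SigN h)]" "nfree (- summaries) \<beta>"
      using demand_grammar_productions by blast
    with \<open>?N \<subseteq> - summaries\<close> show "rlin ?N \<alpha>"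
      unfolding rlin_def nfree_def by blast
  qed
  then show ?thesis unfolding needs_mn_def by blast
qed

lemma mohri_nederhof_demand_grammar_right_chained:
  "right_chained (mohri_nederhof (demand_grammar P {})) (Orig ` (- summaries))"
  unfolding right_chained_def
proof (clarify)
  fix H \<beta>
  let ?G = "demand_grammar P {}" and ?T = "Orig ` (- summaries)"
  assume "(H, \<beta>) \<in> mohri_nederhof ?G"
  then consider
      A \<alpha> where "H = Orig A" "\<beta> = map osym \<alpha>" "(A, \<alpha>) \<in> ?G"
    | A \<alpha> where "(A, \<alpha>) \<in> ?G" "needs_mn ?G (scc ?G A)"
        "(H, \<beta>) \<in> set (mn_split (scc ?G A) (Orig A) [] \<alpha> A)"
    | A where "H = Prime A" "\<beta> = []"
    unfolding mohri_nederhof_def by blast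
  then show "if H \<in> ?T then \<exists>\<beta>' Z. \<beta> = \<beta>' @ [Nt Z] \<and> Z \<in> ?T \<and> nfree ?T \<beta>' else nfree ?T \<beta>"
  proof cases
    case (1 A \<alpha>)
    then consider "A \<in> summaries" "nfree (- summaries) \<alpha>"
      | \<gamma> h where "A \<notin> summaries" "\<alpha> = \<gamma> @ [Nt (SigN h)]" "nfree (- summaries) \<gamma>"
      using demand_grammar_productions by blast
    then show ?thesis
    proof cases
      case 1
      with \<open>H = Orig A\<close> \<open>\<beta> = map osym \<alpha>\<close> show ?thesis by (auto simp: nfree_map_osym_iff)
    next
      case (2 \<gamma> h)
      then have "\<beta> = map osym \<gamma> @ [Nt (Orig (SigN h))]" "nfree ?T (map osym \<gamma>)"
        using \<open>\<beta> = map osym \<alpha>\<close> by (auto simp: nfree_map_osym_iff)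
      with 2 \<open>H = Orig A\<close> show ?thesis by auto
    qed
  next
    case (2 A \<alpha>)
    then have "A \<in> summaries" using not_needs_mn_outside_summaries by blast
    with 2 have "nfree (- summaries) \<alpha>" using demand_grammar_productions by blast
    with 2(3) have "nfree ?T \<beta>"
      unfolding nfree_def by (fastforce dest: mn_split_nonterminals)
    moreover have "H \<notin> ?T" using mn_split_head[OF 2(3)] \<open>A \<in> summaries\<close> by auto
    ultimately show ?thesis by simp
  next
    case 3
    then show ?thesis by (auto simp: nfree_def)
  qed
qed

lemma mohri_nederhof_demand_grammar_no_Main:
  "(Orig (SigN Main), \<beta>) \<notin> mohri_nederhof (demand_grammar P {})"
proof
  assume "(Orig (SigN Main), \<beta>) \<in> mohri_nederhof (demand_grammar P {})"
  then obtain \<alpha> where "(SigN Main, \<alpha>) \<in> demand_grammar P {}"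
    unfolding mohri_nederhof_def by (fastforce dest: mn_split_head)
  then show False using demand_grammar_productions by fastforce
qed

lemma Mlang_singleton_criterion: "Mlang P {s} \<pi> = (\<lambda>u. u @ s) ` Mlang P {[]} \<pi>"
proof -
  let ?M = "mohri_nederhof (demand_grammar P {})"
  have "mohri_nederhof (demand_grammar P {s'}) = insert (Orig (SigN Main), map Tm s') ?M" for s'
    unfolding demand_grammar_insert_criterion
    by (rule mohri_nederhof_insert_terminals) (simp add: not_needs_mn_outside_summaries)
  then show ?thesis
    unfolding Mlang_def
    using lang_right_chained_insert[OF mohri_nederhof_demand_grammar_right_chained _
        mohri_nederhof_demand_grammar_no_Main]
    by simp
qed

theorem mainTheorem3:
  fixes P :: prog and \<pi> :: lab and A :: "('q, dsym) nfa"
  assumes "wf_prog P"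
    and "\<pi> \<in> prog_labels P"
    and "finite (ntrans A)" and "finite (nfinals A)"
    and "nfa_lang A = Canon (Mlang P {[]} \<pi>)"
  shows "{s. set s \<subseteq> {D0, D1} \<and> Simp (Mlang P {s} \<pi>) \<noteq> {}}
           = lconc (enfa_lang (completing A)) {s. set s \<subseteq> {D0, D1}}"
proof -
  let ?E = "enfa_lang (completing A)"
  have "Simp (Mlang P {s} \<pi>) \<noteq> {} \<longleftrightarrow> (\<exists>q \<in> ?E. prefix q s)" if "set s \<subseteq> {D0, D1}" for s
  proof -
    have "Simp (Mlang P {s} \<pi>) \<noteq> {} \<longleftrightarrow>
        (\<exists>u p. u @ p \<in> nfa_lang A \<and> set u \<subseteq> {D0, D1, D2} \<and> set p \<subseteq> {B0, B1} \<and>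
           prefix (map unbar (rev p)) s)"
      unfolding Mlang_singleton_criterion[of P s] Simp_append_nonempty_iff[OF that] assms(5) ..
    also have "\<dots> \<longleftrightarrow> (\<exists>q \<in> ?E. prefix q s)"
      unfolding enfa_lang_completing by auto
    finally show ?thesis .
  qed
  moreover have "?E \<subseteq> {w. set w \<subseteq> {D0, D1}}"
    using enfa_lang_completing_unbarred by blast
  ultimately show ?thesis
    by (subst lconc_words_eq_prefixes) auto
qed

end
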